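(* For every $t\in\mathbb Q_{\ge0}\cup\{\infty\}$ (written as a reduced fraction $p/q$ with $p,q\ge0$, $\infty=\frac10$), the word $\omega_t$ is a reduced word in the free group on $\{x,y,z\}$.
   Context: Modified lattice: the planar graph with vertex set $\mathbb Z^2$ whose edges are the horizontal unit segments $[(i,j),(i+1,j)]$, the vertical unit segments $[(i,j),(i,j+1)]$, and the diagonal segments of slope $-1$ joining $(i,j+1)$ and $(i+1,j)$. Words $\omega_t$: set $\omega_{0/1}=x$, $\omega_{1/0}=z$. For a reduced fraction $t=p/q\in(0,\infty)$, let $L_t$ be the segment from $(0,0)$ to $(q,p)$, oriented from $(0,0)$ to $(q,p)$. List the edges of the modified lattice whose relative interior meets $L_t$, in the order of the intersection points along $L_t$. A horizontal (resp. diagonal, vertical) edge contributes the letter $x$ (resp. $y$, $z$) if the midpoint of the edge is not on the right-hand side of the oriented segment $L_t$ (including the case that the midpoint lies on $L_t$), and contributes $x^{-1}$ (resp. $y^{-1}$, $z^{-1}$) if the midpoint is on the right-hand side. The word $\omega_t$ is the concatenation of these letters in order. *)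

theory Defs
  imports "HOL-Analysis.Analysis"
begin

text \<open>Generators of the free group F(x,y,z); a word is a list of letters,
  a letter being a generator together with a sign (True = g, False = g^-1).\<close>
datatype gen = GX | GY | GZ

type_synonym letter = "gen \<times> bool"

definition reduced_word :: "letter list \<Rightarrow> bool" where
  "reduced_word w \<longleftrightarrow>
     (\<forall>i. Suc i < length w \<longrightarrow>
        \<not> (fst (w ! i) = fst (w ! Suc i) \<and> snd (w ! i) \<noteq> snd (w ! Suc i)))"

datatype edge = HE int int | VE int int | DE int int

fun edge_ends :: "edge \<Rightarrow> (real \<times> real) \<times> (real \<times> real)" where
  "edge_ends (HE i j) = ((of_int i, of_int j), (of_int i + 1, of_int j))"
| "edge_ends (VE i j) = ((of_int i, of_int j), (of_int i, of_int j + 1))"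
| "edge_ends (DE i j) = ((of_int i, of_int j + 1), (of_int i + 1, of_int j))"

fun edge_gen :: "edge \<Rightarrow> gen" where
  "edge_gen (HE i j) = GX"
| "edge_gen (VE i j) = GZ"
| "edge_gen (DE i j) = GY"

definition edge_rel_interior :: "edge \<Rightarrow> (real \<times> real) set" where
  "edge_rel_interior e = open_segment (fst (edge_ends e)) (snd (edge_ends e))"

definition edge_midpoint :: "edge \<Rightarrow> real \<times> real" where
  "edge_midpoint e = midpoint (fst (edge_ends e)) (snd (edge_ends e))"

definition Lseg :: "nat \<Rightarrow> nat \<Rightarrow> (real \<times> real) set" where
  "Lseg p q = closed_segment (0, 0) (real q, real p)"

definition crossing_edges :: "nat \<Rightarrow> nat \<Rightarrow> edge set" where
  "crossing_edges p q = {e. edge_rel_interior e \<inter> Lseg p q \<noteq> {}}"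

definition cross_param :: "nat \<Rightarrow> nat \<Rightarrow> edge \<Rightarrow> real" where
  "cross_param p q e =
     (THE s. 0 \<le> s \<and> s \<le> 1 \<and> (s * real q, s * real p) \<in> edge_rel_interior e)"

definition right_side :: "nat \<Rightarrow> nat \<Rightarrow> real \<times> real \<Rightarrow> bool" where
  "right_side p q m \<longleftrightarrow> real q * snd m - real p * fst m < 0"

definition edge_letter :: "nat \<Rightarrow> nat \<Rightarrow> edge \<Rightarrow> letter" where
  "edge_letter p q e = (edge_gen e, \<not> right_side p q (edge_midpoint e))"

definition crossing_list :: "nat \<Rightarrow> nat \<Rightarrow> edge list" where
  "crossing_list p q =
     (THE es. set es = crossing_edges p q \<and> distinct es \<and>
              sorted_wrt (\<lambda>a b. cross_param p q a < cross_param p q b) es)"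

text \<open>omega_t for t = p/q (reduced fraction, q = 0 meaning t = infinity).\<close>
definition omega :: "nat \<Rightarrow> nat \<Rightarrow> letter list" where
  "omega p q =
     (if p = 0 then [(GX, True)]
      else if q = 0 then [(GZ, True)]
      else map (edge_letter p q) (crossing_list p q))"

end

(* Parametrise L_t by s |-> (s q, s p). Its interior meets the interior of an edge exactly
   where s q, s p or s q + s p is an integer; as gcd(p, q) = 1, no such point is a lattice
   point, so the crossing point determines the edge and with it the generator (z, x or y).
   Between two crossings of the same kind there is one of another kind: two vertical
   (horizontal) crossings are at least 1 apart in x (in y), so x + y grows by more than 1
   and passes an integer; at diagonal crossings x + y = floor x + floor y + 1, so between two
   of them floor x or floor y must grow. Hence consecutive letters of omega_t have different
   generators and cannot cancel. *)

theory Submission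
  imports Defs
begin

lemma between_consecutive_Ints:
  fixes x :: real
  assumes "of_int i < x" "x < of_int i + 1"
  shows "\<lfloor>x\<rfloor> = i" "x \<notin> \<int>"
proof -
  show "\<lfloor>x\<rfloor> = i" using assms by linarith
  then show "x \<notin> \<int>" using assms by (metis less_irrefl of_int_floor)
qed

lemma floor_less_if_not_Ints: "(x::real) \<notin> \<int> \<Longrightarrow> of_int \<lfloor>x\<rfloor> < x"
  using frac_gt_0_iff[of x] by (simp add: frac_def)

lemma Ints_less_imp_add_one_le:
  fixes a b :: real
  assumes "a \<in> \<int>" "b \<in> \<int>" "a < b"
  shows "a + 1 \<le> b"
  using assms by (auto elim!: Ints_cases)

lemma Ints_between_if_gap:
  fixes a b :: real
  assumes "a + 1 < b"
  shows "\<exists>k\<in>\<int>. a < k \<and> k < b"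
proof (rule bexI[of _ "of_int (\<lfloor>a\<rfloor> + 1)"])
  show "a < of_int (\<lfloor>a\<rfloor> + 1) \<and> of_int (\<lfloor>a\<rfloor> + 1) < b"
    using assms by linarith
qed simp

lemma Ints_between_diagonal_crossings:
  fixes x1 y1 x2 y2 :: real
  assumes "x1 \<notin> \<int>" "x2 \<notin> \<int>" "x1 + y1 \<in> \<int>" "x2 + y2 \<in> \<int>" "x1 < x2" "y1 < y2"
  shows "(\<exists>k\<in>\<int>. y1 < k \<and> k < y2) \<or> (\<exists>k\<in>\<int>. x1 < k \<and> k < x2)"
proof (rule disjCI)
  assume no_x: "\<not> (\<exists>k\<in>\<int>. x1 < k \<and> k < x2)"
  define a where "a = \<lfloor>x2\<rfloor>"
  have "of_int a < x2" "x2 < of_int a + 1"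
    using floor_less_if_not_Ints[OF assms(2)] by (auto simp: a_def)
  moreover have "of_int a \<le> x1"
    using no_x \<open>of_int a < x2\<close> by (metis Ints_of_int not_le)
  moreover have "x1 \<noteq> of_int a"
    using assms(1) by auto
  ultimately have x: "of_int a < x1" "x2 < of_int a + 1"
    by auto
  have "x1 + y1 + 1 \<le> x2 + y2"
    using assms by (intro Ints_less_imp_add_one_le) auto
  \<comment> \<open>x1 and x2 have the same integer part a, so y = (x + y) - x passes (x1 + y1) - a\<close>
  then have "y1 < (x1 + y1) - of_int a \<and> (x1 + y1) - of_int a < y2"
    using x by linarith
  moreover have "(x1 + y1) - of_int a \<in> \<int>"
    using assms(3) by simp
  ultimately show "\<exists>k\<in>\<int>. y1 < k \<and> k < y2"
    by blast
qed

lemma finite_Ints_multiples_in_unit_interval: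
  fixes c :: real
  assumes "0 < c"
  shows "finite {s. 0 < s \<and> s < 1 \<and> s * c \<in> \<int>}"
proof (rule finite_subset)
  show "{s. 0 < s \<and> s < 1 \<and> s * c \<in> \<int>} \<subseteq> (\<lambda>k. of_int k / c) ` {0..\<lfloor>c\<rfloor>}"
  proof
    fix s assume s: "s \<in> {s. 0 < s \<and> s < 1 \<and> s * c \<in> \<int>}"
    then have "s = of_int \<lfloor>s * c\<rfloor> / c"
      using assms by simp
    moreover have "\<lfloor>s * c\<rfloor> \<in> {0..\<lfloor>c\<rfloor>}"
      using s assms mult_strict_right_mono[of s 1 c] by (auto intro: floor_mono)
    ultimately show "s \<in> (\<lambda>k. of_int k / c) ` {0..\<lfloor>c\<rfloor>}" by blast
  qed
qed simp

lemma The_sorted_list_by_inverse: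
  fixes T :: "'a::linorder set" and f :: "'a \<Rightarrow> 'b" and g :: "'b \<Rightarrow> 'a"
  assumes "finite T" "\<And>s. s \<in> T \<Longrightarrow> g (f s) = s"
  shows "(THE es. set es = f ` T \<and> distinct es \<and> sorted_wrt (\<lambda>a b. g a < g b) es) =
    map f (sorted_list_of_set T)"
proof (rule the_equality)
  have "inj_on f T"
    using assms(2) by (metis inj_onI)
  moreover have "sorted_wrt (\<lambda>a b. g (f a) < g (f b)) (sorted_list_of_set T)"
    using assms by (auto intro: sorted_wrt_mono_rel[OF _ strict_sorted_list_of_set])
  ultimately show "set (map f (sorted_list_of_set T)) = f ` T \<and> distinct (map f (sorted_list_of_set T)) \<and>
      sorted_wrt (\<lambda>a b. g a < g b) (map f (sorted_list_of_set T))"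
    using assms(1) by (simp add: distinct_map sorted_wrt_map)
next
  fix es assume es: "set es = f ` T \<and> distinct es \<and> sorted_wrt (\<lambda>a b. g a < g b) es"
  then have "map g es = sorted_list_of_set T"
    using assms
    by (intro strict_sorted_equal strict_sorted_list_of_set) (auto simp: sorted_wrt_map image_image)
  moreover have "map (f \<circ> g) es = es"
  proof (rule map_idI)
    fix e assume "e \<in> set es"
    then obtain s where "s \<in> T" "e = f s" using es by blast
    then show "(f \<circ> g) e = e" using assms(2) by simp
  qed
  ultimately show "es = map f (sorted_list_of_set T)"
    by (metis map_map)
qed

lemma sorted_list_of_set_nth_Suc_gap:
  assumes "finite A" "Suc i < length (sorted_list_of_set A)" "x \<in> A"
  shows "\<not> (sorted_list_of_set A ! i < x \<and> x < sorted_list_of_set A ! Suc i)"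
proof -
  obtain k where "k < length (sorted_list_of_set A)" "x = sorted_list_of_set A ! k"
    using assms by (metis in_set_conv_nth set_sorted_list_of_set)
  then show ?thesis
    using assms sorted_nth_mono[OF sorted_sorted_list_of_set, of k i A]
      sorted_nth_mono[OF sorted_sorted_list_of_set, of "Suc i" k A]
    by (cases "k \<le> i") auto
qed

lemma mem_edge_rel_interior:
  "z \<in> edge_rel_interior (HE i j) \<longleftrightarrow>
     snd z = of_int j \<and> of_int i < fst z \<and> fst z < of_int i + 1"
  "z \<in> edge_rel_interior (VE i j) \<longleftrightarrow>
     fst z = of_int i \<and> of_int j < snd z \<and> snd z < of_int j + 1"
  "z \<in> edge_rel_interior (DE i j) \<longleftrightarrow>
     fst z + snd z = of_int i + of_int j + 1 \<and> of_int i < fst z \<and> fst z < of_int i + 1"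
proof -
  note segment = edge_rel_interior_def in_segment(2) prod_eq_iff algebra_simps
  show "z \<in> edge_rel_interior (HE i j) \<longleftrightarrow>
     snd z = of_int j \<and> of_int i < fst z \<and> fst z < of_int i + 1"
    by (auto simp: segment intro!: exI[of _ "fst z - of_int i"])
  show "z \<in> edge_rel_interior (VE i j) \<longleftrightarrow>
     fst z = of_int i \<and> of_int j < snd z \<and> snd z < of_int j + 1"
    by (auto simp: segment intro!: exI[of _ "snd z - of_int j"])
  show "z \<in> edge_rel_interior (DE i j) \<longleftrightarrow>
     fst z + snd z = of_int i + of_int j + 1 \<and> of_int i < fst z \<and> fst z < of_int i + 1"
    by (auto simp: segment intro!: exI[of _ "fst z - of_int i"])
qed

definition edge_through :: "real \<times> real \<Rightarrow> edge" where
  "edge_through z =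
     (if fst z \<in> \<int> then VE \<lfloor>fst z\<rfloor> \<lfloor>snd z\<rfloor>
      else if snd z \<in> \<int> then HE \<lfloor>fst z\<rfloor> \<lfloor>snd z\<rfloor>
      else DE \<lfloor>fst z\<rfloor> (\<lfloor>fst z + snd z\<rfloor> - \<lfloor>fst z\<rfloor> - 1))"

lemma mem_edge_rel_interior_iff:
  "z \<in> edge_rel_interior e \<longleftrightarrow>
     e = edge_through z \<and> (fst z \<in> \<int> \<or> snd z \<in> \<int> \<or> fst z + snd z \<in> \<int>) \<and>
     \<not> (fst z \<in> \<int> \<and> snd z \<in> \<int>)"
proof
  assume e: "z \<in> edge_rel_interior e"
  show "e = edge_through z \<and> (fst z \<in> \<int> \<or> snd z \<in> \<int> \<or> fst z + snd z \<in> \<int>) \<and>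
     \<not> (fst z \<in> \<int> \<and> snd z \<in> \<int>)"
  proof (cases e)
    case (HE i j)
    with e have "snd z = of_int j" "of_int i < fst z" "fst z < of_int i + 1"
      by (simp_all add: mem_edge_rel_interior)
    with HE show ?thesis
      using between_consecutive_Ints[of i "fst z"] by (auto simp: edge_through_def)
  next
    case (VE i j)
    with e have "fst z = of_int i" "of_int j < snd z" "snd z < of_int j + 1"
      by (simp_all add: mem_edge_rel_interior)
    with VE show ?thesis
      using between_consecutive_Ints[of j "snd z"] by (auto simp: edge_through_def)
  next
    case (DE i j)
    with e have sum: "fst z + snd z = of_int (i + j + 1)"
      and x: "of_int i < fst z" "fst z < of_int i + 1"
      by (simp_all add: mem_edge_rel_interior)
    then have y: "of_int j < snd z" "snd z < of_int j + 1"
      by linarith+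
    show ?thesis
      using DE sum between_consecutive_Ints[OF x] between_consecutive_Ints[OF y]
      by (auto simp: edge_through_def)
  qed
next
  assume "e = edge_through z \<and> (fst z \<in> \<int> \<or> snd z \<in> \<int> \<or> fst z + snd z \<in> \<int>) \<and>
     \<not> (fst z \<in> \<int> \<and> snd z \<in> \<int>)"
  then show "z \<in> edge_rel_interior e"
    using floor_less_if_not_Ints[of "fst z"] floor_less_if_not_Ints[of "snd z"]
    by (auto simp: edge_through_def mem_edge_rel_interior)
qed

definition L_point :: "nat \<Rightarrow> nat \<Rightarrow> real \<Rightarrow> real \<times> real" where
  "L_point p q s = (s * real q, s * real p)"

lemma mem_Lseg_iff: "z \<in> Lseg p q \<longleftrightarrow> (\<exists>s\<in>{0..1}. z = L_point p q s)"
  unfolding Lseg_def L_point_def in_segment(1) by (auto simp: algebra_simps)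

lemma crossing_edges_iff:
  "e \<in> crossing_edges p q \<longleftrightarrow> (\<exists>s\<in>{0..1}. L_point p q s \<in> edge_rel_interior e)"
  unfolding crossing_edges_def mem_Collect_eq disjoint_iff mem_Lseg_iff by blast

lemma cross_param_eq_The:
  "cross_param p q e = (THE s. 0 \<le> s \<and> s \<le> 1 \<and> L_point p q s \<in> edge_rel_interior e)"
  by (simp add: cross_param_def L_point_def)

lemma L_point_not_lattice_point:
  assumes "coprime p q" "0 < q" "0 < s" "s < 1"
  shows "\<not> (s * real q \<in> \<int> \<and> s * real p \<in> \<int>)"
proof
  assume "s * real q \<in> \<int> \<and> s * real p \<in> \<int>"
  then obtain a b where a: "s * real q = of_int a" and b: "s * real p = of_int b"
    by (auto elim!: Ints_cases)
  then have "real_of_int (a * int p) = real_of_int (b * int q)"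
    by (metis mult.commute mult.left_commute of_int_mult of_int_of_nat_eq)
  then have "int q dvd a * int p"
    by (metis dvd_triv_right of_int_eq_iff)
  moreover have "coprime (int q) (int p)"
    using assms(1) by (simp add: coprime_commute)
  ultimately have "int q dvd a"
    using coprime_dvd_mult_left_iff by blast
  moreover have "0 < a" "a < int q"
    using a assms(2-4) mult_strict_right_mono[of s 1 "real q"] mult_pos_pos[of s "real q"]
    by (auto simp flip: of_int_less_iff)
  ultimately show False
    using zdvd_imp_le by fastforce
qed

lemma L_point_edge_rel_interior_unique:
  assumes "0 < p" "0 < q"
    and "L_point p q s \<in> edge_rel_interior e" "L_point p q t \<in> edge_rel_interior e"
  shows "s = t"
proof (cases e)
  case (HE i j)
  then have "s * real p = t * real p" using assms by (simp add: mem_edge_rel_interior L_point_def)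
  then show ?thesis using assms by simp
next
  case (VE i j)
  then have "s * real q = t * real q" using assms by (simp add: mem_edge_rel_interior L_point_def)
  then show ?thesis using assms by simp
next
  case (DE i j)
  then have "s * (real q + real p) = t * (real q + real p)"
    using assms by (simp add: mem_edge_rel_interior L_point_def algebra_simps)
  then show ?thesis using assms by simp
qed

definition crossing_times :: "nat \<Rightarrow> nat \<Rightarrow> real set" where
  "crossing_times p q =
     {s. 0 < s \<and> s < 1 \<and> (s * real q \<in> \<int> \<or> s * real p \<in> \<int> \<or> s * real q + s * real p \<in> \<int>)}"

lemma L_point_mem_edge_rel_interior_iff:
  assumes "coprime p q" "0 < q" "0 \<le> s" "s \<le> 1"
  shows "L_point p q s \<in> edge_rel_interior e \<longleftrightarrow>
    s \<in> crossing_times p q \<and> e = edge_through (L_point p q s)"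
proof (cases "s = 0 \<or> s = 1")
  case True
  then show ?thesis
    by (auto simp: mem_edge_rel_interior_iff crossing_times_def L_point_def)
next
  case False
  with assms have "0 < s" "s < 1" by auto
  with L_point_not_lattice_point[OF assms(1,2)] show ?thesis
    by (auto simp: mem_edge_rel_interior_iff crossing_times_def L_point_def)
qed

lemma crossing_edges_eq_image:
  assumes "coprime p q" "0 < q"
  shows "crossing_edges p q = (\<lambda>s. edge_through (L_point p q s)) ` crossing_times p q"
proof -
  have "crossing_times p q \<subseteq> {0..1}"
    by (auto simp: crossing_times_def)
  then show ?thesis
    by (force simp: crossing_edges_iff L_point_mem_edge_rel_interior_iff[OF assms])
qed

lemma cross_param_edge_through:
  assumes "coprime p q" "0 < p" "0 < q" "s \<in> crossing_times p q"
  shows "cross_param p q (edge_through (L_point p q s)) = s"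
proof -
  have "0 \<le> s" "s \<le> 1" using assms(4) by (auto simp: crossing_times_def)
  moreover from this have "L_point p q s \<in> edge_rel_interior (edge_through (L_point p q s))"
    using assms by (simp add: L_point_mem_edge_rel_interior_iff)
  ultimately show ?thesis
    unfolding cross_param_eq_The
    using L_point_edge_rel_interior_unique[OF assms(2,3)] by (intro the_equality) blast+
qed

lemma finite_crossing_times:
  assumes "0 < p" "0 < q"
  shows "finite (crossing_times p q)"
proof -
  have "crossing_times p q =
      {s. 0 < s \<and> s < 1 \<and> s * real q \<in> \<int>} \<union> {s. 0 < s \<and> s < 1 \<and> s * real p \<in> \<int>} \<union>
      {s. 0 < s \<and> s < 1 \<and> s * (real q + real p) \<in> \<int>}"
    by (auto simp: crossing_times_def distrib_left)
  then show ?thesis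
    using assms by (simp add: finite_Ints_multiples_in_unit_interval)
qed

lemma exists_crossing_between:
  assumes "coprime p q" "0 < p" "0 < q"
    and s1: "s1 \<in> crossing_times p q" and s2: "s2 \<in> crossing_times p q" and "s1 < s2"
    and gen: "edge_gen (edge_through (L_point p q s1)) = edge_gen (edge_through (L_point p q s2))"
  shows "\<exists>t\<in>crossing_times p q. s1 < t \<and> t < s2"
proof -
  have crossing_at_level: "\<exists>t\<in>crossing_times p q. s1 < t \<and> t < s2"
    if c: "c \<in> {real q, real p, real q + real p}" and k: "k \<in> \<int>" "s1 * c < k" "k < s2 * c"
    for c k
  proof -
    have "0 < c" using c assms(2,3) by auto
    define t where "t = k / c"
    have tc: "t * c = k" using \<open>0 < c\<close> by (simp add: t_def)
    have "s1 < t" "t < s2"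
      using k \<open>0 < c\<close> by (simp_all add: t_def pos_less_divide_eq pos_divide_less_eq)
    moreover have "t \<in> crossing_times p q"
      using c k tc s1 s2 \<open>s1 < t\<close> \<open>t < s2\<close> by (auto simp: crossing_times_def distrib_left)
    ultimately show ?thesis by blast
  qed
  define x1 y1 x2 y2 where "x1 = s1 * real q" "y1 = s1 * real p" "x2 = s2 * real q" "y2 = s2 * real p"
  have mono: "x1 < x2" "y1 < y2"
    using \<open>s1 < s2\<close> assms(2,3) by (simp_all add: x1_y1_x2_y2_def)
  have "\<not> (x1 \<in> \<int> \<and> y1 \<in> \<int>)" "\<not> (x2 \<in> \<int> \<and> y2 \<in> \<int>)"
    using L_point_not_lattice_point[OF assms(1,3)] s1 s2
    by (auto simp: crossing_times_def x1_y1_x2_y2_def)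
  then consider "x1 \<in> \<int> \<and> x2 \<in> \<int> \<or> y1 \<in> \<int> \<and> y2 \<in> \<int>"
    | "x1 \<notin> \<int>" "x2 \<notin> \<int>" "x1 + y1 \<in> \<int>" "x2 + y2 \<in> \<int>"
    using gen s1 s2
    by (auto simp: edge_through_def L_point_def crossing_times_def x1_y1_x2_y2_def split: if_splits)
  then show ?thesis
  proof cases
    case 1
    then have "(x1 + y1) + 1 < x2 + y2"
      using mono Ints_less_imp_add_one_le[of x1 x2] Ints_less_imp_add_one_le[of y1 y2] by auto
    then obtain k where "k \<in> \<int>" "x1 + y1 < k" "k < x2 + y2"
      using Ints_between_if_gap by blast
    then show ?thesis
      using crossing_at_level[of "real q + real p" k] by (simp add: x1_y1_x2_y2_def distrib_left)
  next
    case 2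
    then show ?thesis
      using Ints_between_diagonal_crossings[OF 2 mono] crossing_at_level[of "real q"] crossing_at_level[of "real p"]
      by (auto simp: x1_y1_x2_y2_def)
  qed
qed

lemma crossing_list_eq_map:
  assumes "coprime p q" "0 < p" "0 < q"
  shows "crossing_list p q =
    map (\<lambda>s. edge_through (L_point p q s)) (sorted_list_of_set (crossing_times p q))"
  unfolding crossing_list_def crossing_edges_eq_image[OF assms(1,3)]
  using finite_crossing_times[OF assms(2,3)] cross_param_edge_through[OF assms]
  by (rule The_sorted_list_by_inverse)

lemma reduced_word_if_adjacent_gens_differ:
  assumes "\<And>i. Suc i < length w \<Longrightarrow> fst (w ! i) \<noteq> fst (w ! Suc i)"
  shows "reduced_word w"
  using assms by (auto simp: reduced_word_def)

theorem proposition3p3: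
  fixes p q :: nat
  assumes "coprime p q"
  shows "reduced_word (omega p q)"
proof (cases "p = 0 \<or> q = 0")
  case True
  then show ?thesis by (auto simp: omega_def reduced_word_def)
next
  case False
  then have pq: "0 < p" "0 < q" by auto
  define T where "T = crossing_times p q"
  define L where "L = sorted_list_of_set T"
  let ?edge = "\<lambda>s. edge_through (L_point p q s)"
  have fin: "finite T"
    using finite_crossing_times[OF pq] by (simp add: T_def)
  have omega: "omega p q = map (\<lambda>s. edge_letter p q (?edge s)) L"
    using False crossing_list_eq_map[OF assms pq] by (simp add: omega_def L_def T_def)
  show ?thesis
  proof (rule reduced_word_if_adjacent_gens_differ)
    fix i assume "Suc i < length (omega p q)"
    then have i: "Suc i < length L" by (simp add: omega)
    then have "L ! i \<in> T" "L ! Suc i \<in> T" "L ! i < L ! Suc i"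
      using fin nth_mem[of i L] nth_mem[of "Suc i" L] strict_sorted_list_of_set[of T]
      by (auto simp: L_def sorted_wrt_iff_nth_less)
    then have "edge_gen (?edge (L ! i)) \<noteq> edge_gen (?edge (L ! Suc i))"
      using exists_crossing_between[OF assms pq, of "L ! i" "L ! Suc i"]
        sorted_list_of_set_nth_Suc_gap[OF fin, of i] i
      by (auto simp: L_def T_def)
    then show "fst (omega p q ! i) \<noteq> fst (omega p q ! Suc i)"
      using i by (simp add: omega edge_letter_def)
  qed
qed

end
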